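(* Let $\mathcal A\subset\mathbb R^n$ be compact with diameter $D_{\mathcal A}<\infty$, let $\mathcal X=\mathrm{conv}(\mathcal A)$, let $f$ have $L$-Lipschitz gradient, and let $\eta>1$. Run the AC-FW algorithm with the closed-loop Frank-Wolfe subroutine and a damping sequence satisfying Condition (D), with $L_0>0$. Then the subroutine satisfies parts (i) and (ii) of Condition (S); more precisely, for every $t\ge0$, $$|\mathcal G\cap\mathcal I_\eta\cap[t]|\ge t+1-\left\lfloor\log_\eta\!\left(\frac{L}{rL_0}\right)\right\rfloor.$$ If additionally $f$ is convex, then part (iii) of Condition (S) holds with $R=1$.
   Context: $D_{\mathcal A}:=\sup_{x,y\in\mathcal A}\|x-y\|_2$; $f:\mathbb R^n\to\mathbb R$ is differentiable with $\|\nabla f(x)-\nabla f(y)\|_2\le L\|x-y\|_2$. $x^\star$ is an optimal solution of $\min_{x\in\mathcal X}f(x)$. For $x\ne y$, $\ell(x,y):=2|f(y)-f(x)-\nabla f(x)^\top(y-x)|/\|y-x\|_2^2$, $\ell(x,x):=0$. AC-FW algorithm: given $\{r_t\}_{t\ge0}$ and a subroutine, pick $x_{-1}\in\mathcal A$, $x_0\in\arg\min_{v\in\mathcal A}\nabla f(x_{-1})^\top v$, $L_0:=\ell(x_{-1},x_0)$. For $t=0,1,\dots$: $v_t\in\arg\min_{v\in\mathcal A}\nabla f(x_t)^\top v$; the subroutine returns $(d_t,\gamma_t^{\max})$; $\gamma_t:=\min\{\nabla f(x_t)^\top d_t/(L_t\|d_t\|_2^2),\gamma_t^{\max}\}$;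 $\bar x_{t+1}:=x_t-\gamma_td_t$; $L_{t+1}:=\max\{\ell(x_t,\bar x_{t+1}),r_tL_t\}$; $x_{t+1}:=\bar x_{t+1}$ if $f(\bar x_{t+1})<f(x_t)$, else $x_{t+1}:=x_t$. Closed-loop Frank-Wolfe subroutine: $d_t:=x_t-v_t$, $\gamma_t^{\max}:=1$. $[t]:=\{0,\dots,t\}$; $\mathcal I_\eta:=\{t\ge0:L_{t+1}\le\eta L_t\}$; $\mathcal G:=\{t\ge0:\gamma_t^{\max}\ge1\text{ or }\gamma_t<\gamma_t^{\max}\}$. Condition (D): $r_t\in(0,1]$ for all $t$ and $r:=\prod_{t\ge0}r_t\in(0,1]$. Condition (S): for all $t\ge0$: (i) $\|d_t\|_2\le D_{\mathcal A}$ and $x_t-\gamma d_t\in\mathcal X$ for all $\gamma\in[0,\gamma_t^{\max}]$; (ii) $\mathcal G$ is infinite; (iii) if $f$ is convex, there is $R\ge1$ independent of $t$ with $\nabla f(x_t)^\top d_t\ge(f(x_t)-f(x^\star))/R$. *)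

theory Defs
  imports "HOL-Analysis.Analysis"
begin

definition ell :: "('a::euclidean_space \<Rightarrow> real) \<Rightarrow> ('a \<Rightarrow> 'a) \<Rightarrow> 'a \<Rightarrow> 'a \<Rightarrow> real" where
  "ell f g x y = (if x = y then 0
     else 2 * \<bar>f y - f x - g x \<bullet> (y - x)\<bar> / (norm (y - x))\<^sup>2)"

text \<open>A run of AC-FW with the closed-loop Frank-Wolfe subroutine, with damping
  sequence r, initial point xm1 (= x_{-1}), iterates x, FW vertices v, directions d,
  maximal step sizes gmax, step sizes gam, curvature estimates Lc, trial points xbar.\<close>
definition acfw_cl_run ::
  "'a::euclidean_space set \<Rightarrow> ('a \<Rightarrow> real) \<Rightarrow> ('a \<Rightarrow> 'a) \<Rightarrow> (nat \<Rightarrow> real) \<Rightarrow> 'a \<Rightarrow>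
   (nat \<Rightarrow> 'a) \<Rightarrow> (nat \<Rightarrow> 'a) \<Rightarrow> (nat \<Rightarrow> 'a) \<Rightarrow> (nat \<Rightarrow> real) \<Rightarrow> (nat \<Rightarrow> real) \<Rightarrow>
   (nat \<Rightarrow> real) \<Rightarrow> (nat \<Rightarrow> 'a) \<Rightarrow> bool" where
  "acfw_cl_run A f g r xm1 x v d gmax gam Lc xbar \<longleftrightarrow>
     xm1 \<in> A \<and>
     x 0 \<in> A \<and> (\<forall>u\<in>A. g xm1 \<bullet> x 0 \<le> g xm1 \<bullet> u) \<and>
     Lc 0 = ell f g xm1 (x 0) \<and>
     (\<forall>t. v t \<in> A \<and> (\<forall>u\<in>A. g (x t) \<bullet> v t \<le> g (x t) \<bullet> u)) \<and>
     (\<forall>t. d t = x t - v t \<and> gmax t = 1) \<and>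
     (\<forall>t. gam t = min (g (x t) \<bullet> d t / (Lc t * (norm (d t))\<^sup>2)) (gmax t)) \<and>
     (\<forall>t. xbar (Suc t) = x t - gam t *\<^sub>R d t) \<and>
     (\<forall>t. Lc (Suc t) = max (ell f g (x t) (xbar (Suc t))) (r t * Lc t)) \<and>
     (\<forall>t. x (Suc t) = (if f (xbar (Suc t)) < f (x t) then xbar (Suc t) else x t))"

definition I_eta :: "real \<Rightarrow> (nat \<Rightarrow> real) \<Rightarrow> nat set" where
  "I_eta \<eta> Lc = {t. Lc (Suc t) \<le> \<eta> * Lc t}"

definition G_set :: "(nat \<Rightarrow> real) \<Rightarrow> (nat \<Rightarrow> real) \<Rightarrow> nat set" where
  "G_set gmax gam = {t. gmax t \<ge> 1 \<or> gam t < gmax t}"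

end

theory Submission
  imports Defs
begin

text \<open>The closed-loop step size lies in \<open>[0, 1]\<close> because the Frank-Wolfe gap
  \<open>\<nabla>f(x\<^sub>t)\<^sup>T d\<^sub>t\<close> is nonnegative, so all iterates stay in \<open>conv A\<close>; and since
  \<open>\<gamma>\<^sub>t\<^sup>m\<^sup>a\<^sup>x = 1\<close>, every step belongs to \<open>\<G>\<close>. By the descent lemma every
  curvature estimate \<open>\<ell>(x, y)\<close> is at most \<open>L\<close>, hence so is every \<open>L\<^sub>t\<close>. A step outside
  \<open>\<I>\<^sub>\<eta>\<close> multiplies \<open>L\<^sub>t\<close> by more than \<open>\<eta>\<close>, while any step loses at most the factor
  \<open>r\<^sub>t\<close>; so if \<open>K\<close> steps up to \<open>t\<close> lie outside \<open>\<I>\<^sub>\<eta>\<close>, then \<open>\<eta>\<^sup>K r L\<^sub>0 \<le> L\<close>,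
  i.e. \<open>K \<le> log\<^sub>\<eta> (L / (r L\<^sub>0))\<close>. In the convex case the gradient inequality at \<open>x\<^sub>t\<close>,
  combined with the minimality of the Frank-Wolfe vertex \<open>v\<^sub>t\<close> over \<open>conv A\<close>, gives
  \<open>\<nabla>f(x\<^sub>t)\<^sup>T d\<^sub>t \<ge> f(x\<^sub>t) - f(x\<^sup>\<star>)\<close>.\<close>

lemma has_real_derivative_along_line:
  fixes f :: "'a::real_inner \<Rightarrow> real"
  assumes grad: "\<And>y. (f has_derivative (\<lambda>h. g y \<bullet> h)) (at y)"
  shows "((\<lambda>s. f (x + s *\<^sub>R h)) has_real_derivative (g (x + s *\<^sub>R h) \<bullet> h)) (at s)"
proof -
  have "((\<lambda>s. x + s *\<^sub>R h) has_derivative (\<lambda>t. t *\<^sub>R h)) (at s)"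
    by (auto intro!: derivative_eq_intros)
  from diff_chain_at[OF this grad]
  have "((\<lambda>s. f (x + s *\<^sub>R h)) has_derivative (\<lambda>t. g (x + s *\<^sub>R h) \<bullet> (t *\<^sub>R h))) (at s)"
    by (simp add: o_def)
  moreover have "(\<lambda>t. g (x + s *\<^sub>R h) \<bullet> (t *\<^sub>R h)) = (*) (g (x + s *\<^sub>R h) \<bullet> h)"
    by auto
  ultimately show ?thesis
    by (simp add: has_field_derivative_def)
qed

lemma deriv_le_linear_imp_diff_le:
  fixes \<phi> \<phi>' :: "real \<Rightarrow> real"
  assumes deriv: "\<And>s. 0 \<le> s \<Longrightarrow> s \<le> 1 \<Longrightarrow> (\<phi> has_real_derivative \<phi>' s) (at s)"
    and bound: "\<And>s. 0 \<le> s \<Longrightarrow> s \<le> 1 \<Longrightarrow> \<phi>' s \<le> 2 * c * s"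
  shows "\<phi> 1 - \<phi> 0 \<le> c"
proof -
  have "(\<lambda>s. \<phi> s - c * s\<^sup>2) 1 \<le> (\<lambda>s. \<phi> s - c * s\<^sup>2) 0"
  proof (rule DERIV_nonpos_imp_nonincreasing[where f = "\<lambda>s. \<phi> s - c * s\<^sup>2"])
    fix s :: real assume s: "0 \<le> s" "s \<le> 1"
    have "((\<lambda>s. \<phi> s - c * s\<^sup>2) has_real_derivative \<phi>' s - c * (2 * s)) (at s)"
      using deriv[OF s] by (auto intro!: derivative_eq_intros)
    moreover have "\<phi>' s - c * (2 * s) \<le> 0"
      using bound[OF s] by simp
    ultimately show "\<exists>y. ((\<lambda>s. \<phi> s - c * s\<^sup>2) has_real_derivative y) (at s) \<and> y \<le> 0"
      by blast
  qed simp
  then show ?thesis by simp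
qed

lemma abs_first_order_remainder_le:
  fixes f :: "'a::real_inner \<Rightarrow> real"
  assumes grad: "\<And>y. (f has_derivative (\<lambda>h. g y \<bullet> h)) (at y)"
    and lip: "\<And>y z. norm (g y - g z) \<le> L * norm (y - z)"
  shows "\<bar>f y - f x - g x \<bullet> (y - x)\<bar> \<le> L / 2 * (norm (y - x))\<^sup>2"
proof -
  define h where "h = y - x"
  define \<phi> where "\<phi> s = f (x + s *\<^sub>R h) - s * (g x \<bullet> h)" for s
  define \<phi>' where "\<phi>' s = (g (x + s *\<^sub>R h) - g x) \<bullet> h" for s
  have deriv: "(\<phi> has_real_derivative \<phi>' s) (at s)" for s
    unfolding \<phi>_def \<phi>'_def
    by (auto intro!: derivative_eq_intros has_real_derivative_along_line[OF grad]
        simp: inner_diff_left)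
  have bound: "\<bar>\<phi>' s\<bar> \<le> 2 * (L / 2 * (norm h)\<^sup>2) * s" if "0 \<le> s" for s
  proof -
    have "\<bar>\<phi>' s\<bar> \<le> norm (g (x + s *\<^sub>R h) - g x) * norm h"
      unfolding \<phi>'_def by (rule Cauchy_Schwarz_ineq2)
    also have "\<dots> \<le> L * norm (s *\<^sub>R h) * norm h"
      using lip[of "x + s *\<^sub>R h" x] by (intro mult_right_mono) auto
    finally show ?thesis
      using that by (simp add: power2_eq_square mult_ac)
  qed
  have "\<phi> 1 - \<phi> 0 \<le> L / 2 * (norm h)\<^sup>2"
    by (rule deriv_le_linear_imp_diff_le[OF deriv]) (use bound in fastforce)
  moreover have "(- \<phi> 1) - (- \<phi> 0) \<le> L / 2 * (norm h)\<^sup>2"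
    by (rule deriv_le_linear_imp_diff_le[where \<phi>' = "\<lambda>s. - \<phi>' s"])
      (use deriv bound in \<open>auto intro: DERIV_minus simp: abs_le_iff\<close>)
  ultimately show ?thesis
    unfolding abs_le_iff by (simp add: \<phi>_def h_def)
qed

lemma ell_le_lipschitz_const:
  fixes f :: "'a::euclidean_space \<Rightarrow> real"
  assumes grad: "\<And>y. (f has_derivative (\<lambda>h. g y \<bullet> h)) (at y)"
    and lip: "\<And>y z. norm (g y - g z) \<le> L * norm (y - z)"
  shows "ell f g x y \<le> L"
proof (cases "x = y")
  case True
  obtain b :: 'a where "b \<in> Basis"
    using nonempty_Basis by blast
  then have "0 \<le> L"
    using order_trans[OF norm_ge_zero lip[of b 0]] by simp
  then show ?thesis
    using True by (simp add: ell_def)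
next
  case False
  then show ?thesis
    using abs_first_order_remainder_le[OF grad lip, of y x]
    by (simp add: ell_def divide_le_eq)
qed

lemma convex_on_gradient_inequality:
  fixes f :: "'a::real_inner \<Rightarrow> real"
  assumes convex: "convex_on UNIV f"
    and grad: "\<And>y. (f has_derivative (\<lambda>h. g y \<bullet> h)) (at y)"
  shows "f x + g x \<bullet> (y - x) \<le> f y"
proof -
  define \<phi> where "\<phi> s = f (x + s *\<^sub>R (y - x))" for s
  have "convex_on UNIV \<phi>"
  proof (rule convex_onI)
    fix s a b :: real assume s: "0 < s" "s < 1"
    have "x + ((1 - s) *\<^sub>R a + s *\<^sub>R b) *\<^sub>R (y - x)
        = (1 - s) *\<^sub>R (x + a *\<^sub>R (y - x)) + s *\<^sub>R (x + b *\<^sub>R (y - x))"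
      by (simp add: algebra_simps)
    then show "\<phi> ((1 - s) *\<^sub>R a + s *\<^sub>R b) \<le> (1 - s) * \<phi> a + s * \<phi> b"
      unfolding \<phi>_def using convex_onD[OF convex, of s] s by simp
  qed simp
  moreover have "(\<phi> has_real_derivative g x \<bullet> (y - x)) (at 0)"
    using has_real_derivative_along_line[OF grad, of x "y - x" 0] by (simp add: \<phi>_def[abs_def])
  ultimately have "\<phi> 1 - \<phi> 0 \<ge> (g x \<bullet> (y - x)) * (1 - 0)"
    by (intro convex_on_imp_above_tangent) auto
  then show ?thesis
    by (simp add: \<phi>_def)
qed

lemma inner_ge_on_convex_hull:
  assumes "\<And>u. u \<in> A \<Longrightarrow> c \<bullet> v \<le> c \<bullet> u" and "y \<in> convex hull A"
  shows "c \<bullet> v \<le> c \<bullet> y"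
proof -
  have "convex hull A \<subseteq> {y. c \<bullet> v \<le> c \<bullet> y}"
    by (rule hull_minimal) (use assms(1) convex_halfspace_ge in auto)
  then show ?thesis
    using assms(2) by blast
qed

lemma norm_diff_le_diameter_convex_hull:
  fixes A :: "'a::real_normed_vector set"
  assumes "bounded A" "v \<in> A" "y \<in> convex hull A"
  shows "norm (y - v) \<le> diameter A"
proof -
  have "A \<subseteq> cball v (diameter A)"
    using diameter_bounded_bound[OF assms(1,2)] by auto
  then have "convex hull A \<subseteq> cball v (diameter A)"
    by (rule hull_minimal) (rule convex_cball)
  then show ?thesis
    using assms(3) by (auto simp: dist_norm norm_minus_commute)
qed

lemma limit_le_partial_prod:
  fixes r :: "nat \<Rightarrow> real"
  assumes "\<And>t. 0 \<le> r t" "\<And>t. r t \<le> 1" and "(\<lambda>T. \<Prod>t<T. r t) \<longlonglongrightarrow> \<rho>"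
  shows "\<rho> \<le> (\<Prod>t<n. r t)"
proof (rule decseq_ge[OF decseq_SucI assms(3)])
  fix n
  have "0 \<le> (\<Prod>t<n. r t)"
    using assms(1) by (rule prod_nonneg)
  then show "(\<Prod>t<Suc n. r t) \<le> (\<Prod>t<n. r t)"
    using assms(1,2) by (simp add: mult_left_le)
qed

lemma I_eta_growth:
  fixes Lc r :: "nat \<Rightarrow> real"
  assumes "0 < \<eta>" "\<And>t. 0 \<le> r t" "\<And>t. r t \<le> 1" "0 \<le> Lc 0"
    and growth: "\<And>t. r t * Lc t \<le> Lc (Suc t)"
  shows "\<eta> ^ card ({..<n} - I_eta \<eta> Lc) * (\<Prod>s<n. r s) * Lc 0 \<le> Lc n"
proof (induction n)
  case 0
  show ?case by simp
next
  case (Suc n)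
  define P where "P = \<eta> ^ card ({..<n} - I_eta \<eta> Lc) * (\<Prod>s<n. r s) * Lc 0"
  have "0 \<le> P"
    unfolding P_def using assms(1,2,4) by (simp add: prod_nonneg)
  have "P * r n \<le> Lc n"
    using mult_left_le[OF assms(3)[of n] \<open>0 \<le> P\<close>] Suc by (simp add: P_def)
  show ?case
  proof (cases "n \<in> I_eta \<eta> Lc")
    case True
    then have "{..<Suc n} - I_eta \<eta> Lc = {..<n} - I_eta \<eta> Lc"
      by (auto simp: lessThan_Suc)
    then have "\<eta> ^ card ({..<Suc n} - I_eta \<eta> Lc) * (\<Prod>s<Suc n. r s) * Lc 0 = P * r n"
      by (simp add: P_def mult_ac)
    also have "\<dots> \<le> Lc n * r n"
      using Suc assms(2) by (simp add: P_def mult_right_mono)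
    also have "\<dots> \<le> Lc (Suc n)"
      using growth[of n] by (simp add: mult.commute)
    finally show ?thesis .
  next
    case False
    then have "card ({..<Suc n} - I_eta \<eta> Lc) = Suc (card ({..<n} - I_eta \<eta> Lc))"
      by (simp add: lessThan_Suc insert_Diff_if)
    then have "\<eta> ^ card ({..<Suc n} - I_eta \<eta> Lc) * (\<Prod>s<Suc n. r s) * Lc 0 = \<eta> * (P * r n)"
      by (simp add: P_def mult_ac)
    also have "\<dots> \<le> \<eta> * Lc n"
      using \<open>P * r n \<le> Lc n\<close> assms(1) by simp
    also have "\<dots> < Lc (Suc n)"
      using False by (simp add: I_eta_def)
    finally show ?thesis by simp
  qed
qed

lemma card_I_eta_lower_bound:
  fixes Lc r :: "nat \<Rightarrow> real"
  assumes "1 < \<eta>" "\<And>t. 0 \<le> r t" "\<And>t. r t \<le> 1" "0 < Lc 0"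
    and growth: "\<And>t. r t * Lc t \<le> Lc (Suc t)" and bounded: "\<And>t. Lc t \<le> L"
    and "0 < \<rho>" "\<And>n. \<rho> \<le> (\<Prod>t<n. r t)"
  shows "real t + 1 - of_int \<lfloor>log \<eta> (L / (\<rho> * Lc 0))\<rfloor>
    \<le> real (card (I_eta \<eta> Lc \<inter> {0..t}))"
proof -
  define K where "K = card ({..<Suc t} - I_eta \<eta> Lc)"
  have "\<eta> ^ K * \<rho> * Lc 0 \<le> \<eta> ^ K * (\<Prod>s<Suc t. r s) * Lc 0"
    by (intro mult_right_mono mult_left_mono assms(8)) (use assms(1,4) in auto)
  also have "\<dots> \<le> Lc (Suc t)"
    unfolding K_def by (rule I_eta_growth) (use assms(1-4) growth in auto)
  also have "\<dots> \<le> L"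
    by (rule bounded)
  finally have "\<eta> ^ K \<le> L / (\<rho> * Lc 0)"
    using assms(4,7) by (simp add: field_simps)
  moreover have "0 < L / (\<rho> * Lc 0)"
    using assms(4,7) bounded[of 0] by simp
  ultimately have "real K \<le> log \<eta> (L / (\<rho> * Lc 0))"
    using assms(1) by (simp add: le_log_iff powr_realpow)
  then have "real K \<le> of_int \<lfloor>log \<eta> (L / (\<rho> * Lc 0))\<rfloor>"
    by (metis le_floor_iff of_int_of_nat_eq of_int_le_iff)
  moreover have "card {..<Suc t} = card ({..<Suc t} \<inter> I_eta \<eta> Lc) + K"
    unfolding K_def by (rule card_Int_Diff) simp
  then have "card (I_eta \<eta> Lc \<inter> {0..t}) + K = Suc t"
    by (simp add: lessThan_Suc_atMost atLeast0AtMost Int_commute)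
  ultimately show ?thesis
    by linarith
qed

locale acfw_closed_loop =
  fixes A :: "'a::euclidean_space set" and f :: "'a \<Rightarrow> real" and g :: "'a \<Rightarrow> 'a"
    and r :: "nat \<Rightarrow> real" and xm1 :: 'a and x v d xbar :: "nat \<Rightarrow> 'a"
    and gmax gam Lc :: "nat \<Rightarrow> real"
  assumes run: "acfw_cl_run A f g r xm1 x v d gmax gam Lc xbar"
begin

lemma x0_in: "x 0 \<in> A"
  and Lc_0: "Lc 0 = ell f g xm1 (x 0)"
  and v_in: "v t \<in> A"
  and v_min: "u \<in> A \<Longrightarrow> g (x t) \<bullet> v t \<le> g (x t) \<bullet> u"
  and d_eq: "d t = x t - v t"
  and gmax_eq: "gmax t = 1"
  and gam_eq: "gam t = min (g (x t) \<bullet> d t / (Lc t * (norm (d t))\<^sup>2)) (gmax t)"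
  and xbar_Suc: "xbar (Suc t) = x t - gam t *\<^sub>R d t"
  and Lc_Suc: "Lc (Suc t) = max (ell f g (x t) (xbar (Suc t))) (r t * Lc t)"
  and x_Suc: "x (Suc t) = (if f (xbar (Suc t)) < f (x t) then xbar (Suc t) else x t)"
  using run by (auto simp: acfw_cl_run_def)

lemma G_set_eq_UNIV: "G_set gmax gam = UNIV"
  by (simp add: G_set_def gmax_eq)

lemma Lc_growth: "r t * Lc t \<le> Lc (Suc t)"
  by (simp add: Lc_Suc)

lemma Lc_pos:
  assumes "0 < Lc 0" "\<And>t. 0 < r t"
  shows "0 < Lc t"
proof (induction t)
  case (Suc t)
  show ?case
    by (rule less_le_trans[OF mult_pos_pos[OF assms(2) Suc] Lc_growth])
qed (use assms(1) in simp)

lemma Lc_le: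
  assumes ell_le: "\<And>y z. ell f g y z \<le> L" and "\<And>t. 0 \<le> r t" "\<And>t. r t \<le> 1"
  shows "Lc t \<le> L"
proof (induction t)
  case 0
  then show ?case by (simp add: Lc_0 ell_le)
next
  case (Suc t)
  have "0 \<le> L"
    using ell_le[of "x 0" "x 0"] by (simp add: ell_def)
  have "r t * Lc t \<le> L"
  proof (cases "0 \<le> Lc t")
    case True
    then show ?thesis
      using Suc assms(2,3)[of t] mult_left_le_one_le[of "Lc t" "r t"] by linarith
  next
    case False
    then show ?thesis
      using \<open>0 \<le> L\<close> assms(2)[of t] mult_nonneg_nonpos[of "r t" "Lc t"] by linarith
  qed
  then show ?case
    by (simp add: Lc_Suc ell_le)
qed

lemma v_min_on_convex_hull: "y \<in> convex hull A \<Longrightarrow> g (x t) \<bullet> v t \<le> g (x t) \<bullet> y"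
  by (rule inner_ge_on_convex_hull[OF v_min])

lemma step_in_convex_hull:
  assumes "x t \<in> convex hull A" "0 \<le> \<gamma>" "\<gamma> \<le> 1"
  shows "x t - \<gamma> *\<^sub>R d t \<in> convex hull A"
proof -
  have "(1 - \<gamma>) *\<^sub>R x t + \<gamma> *\<^sub>R v t \<in> convex hull A"
    using assms hull_inc[OF v_in] by (intro convexD[OF convex_convex_hull]) auto
  then show ?thesis
    by (simp add: d_eq algebra_simps)
qed

lemma x_in_convex_hull:
  assumes "\<And>t. 0 \<le> Lc t"
  shows "x t \<in> convex hull A"
proof (induction t)
  case 0
  then show ?case using x0_in by (rule hull_inc)
next
  case (Suc t)
  have "0 \<le> g (x t) \<bullet> d t"
    using v_min_on_convex_hull[OF Suc] by (simp add: d_eq inner_diff_right)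
  then have "0 \<le> gam t" "gam t \<le> 1"
    using assms[of t] by (auto simp: gam_eq gmax_eq)
  then have "xbar (Suc t) \<in> convex hull A"
    unfolding xbar_Suc by (rule step_in_convex_hull[OF Suc])
  then show ?case
    using Suc by (simp add: x_Suc)
qed

lemma fw_gap_ge_primal_gap:
  assumes "convex_on UNIV f" "\<And>y. (f has_derivative (\<lambda>h. g y \<bullet> h)) (at y)"
    and "xstar \<in> convex hull A"
  shows "f (x t) - f xstar \<le> g (x t) \<bullet> d t"
proof -
  have "f (x t) + g (x t) \<bullet> (xstar - x t) \<le> f xstar"
    by (rule convex_on_gradient_inequality[OF assms(1,2)])
  moreover have "g (x t) \<bullet> v t \<le> g (x t) \<bullet> xstar"
    by (rule v_min_on_convex_hull[OF assms(3)])
  ultimately show ?thesis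
    unfolding d_eq inner_diff_right by linarith
qed

end

theorem lemma5:
  fixes A :: "'a::euclidean_space set" and f :: "'a \<Rightarrow> real" and g :: "'a \<Rightarrow> 'a"
    and L \<eta> rr :: real and r :: "nat \<Rightarrow> real" and xm1 xstar :: 'a
    and x v d xbar :: "nat \<Rightarrow> 'a" and gmax gam Lc :: "nat \<Rightarrow> real"
  assumes "compact A"
    and grad: "\<And>y. (f has_derivative (\<lambda>h. g y \<bullet> h)) (at y)"
    and lip: "\<And>y z. norm (g y - g z) \<le> L * norm (y - z)"
    and "\<eta> > 1"
    and D1: "\<And>t. 0 < r t \<and> r t \<le> 1"
    and D2: "(\<lambda>T. \<Prod>t<T. r t) \<longlonglongrightarrow> rr" and D3: "0 < rr"
    and run: "acfw_cl_run A f g r xm1 x v d gmax gam Lc xbar"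
    and L0: "Lc 0 > 0"
    and opt: "xstar \<in> convex hull A" "\<And>y. y \<in> convex hull A \<Longrightarrow> f xstar \<le> f y"
  shows "(\<forall>t. norm (d t) \<le> diameter A \<and>
              (\<forall>\<gamma>\<in>{0..gmax t}. x t - \<gamma> *\<^sub>R d t \<in> convex hull A))
       \<and> infinite (G_set gmax gam)
       \<and> (\<forall>t. real (card (G_set gmax gam \<inter> I_eta \<eta> Lc \<inter> {0..t}))
                \<ge> real t + 1 - of_int \<lfloor>log \<eta> (L / (rr * Lc 0))\<rfloor>)
       \<and> (convex_on UNIV f \<longrightarrow> (\<forall>t. g (x t) \<bullet> d t \<ge> (f (x t) - f xstar) / 1))"
proof -
  interpret acfw_closed_loop A f g r xm1 x v d xbar gmax gam Lc
    using run by unfold_locales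
  have r_nonneg: "0 \<le> r t" and r_le_1: "r t \<le> 1" for t
    using D1[of t] by auto
  have Lc_positive: "0 < Lc t" for t
    by (rule Lc_pos[OF L0]) (use D1 in blast)
  have x_in: "x t \<in> convex hull A" for t
    by (rule x_in_convex_hull[OF less_imp_le[OF Lc_positive]])
  have Lc_le_L: "Lc t \<le> L" for t
    by (rule Lc_le[OF ell_le_lipschitz_const[OF grad lip] r_nonneg r_le_1])
  have "\<forall>t. norm (d t) \<le> diameter A \<and>
      (\<forall>\<gamma>\<in>{0..gmax t}. x t - \<gamma> *\<^sub>R d t \<in> convex hull A)"
    using norm_diff_le_diameter_convex_hull[OF compact_imp_bounded[OF \<open>compact A\<close>] v_in x_in]
      step_in_convex_hull[OF x_in]
    by (simp add: d_eq gmax_eq)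
  moreover have "real t + 1 - of_int \<lfloor>log \<eta> (L / (rr * Lc 0))\<rfloor>
      \<le> real (card (I_eta \<eta> Lc \<inter> {0..t}))" for t
    using card_I_eta_lower_bound[OF \<open>\<eta> > 1\<close> r_nonneg r_le_1 L0 Lc_growth Lc_le_L D3
        limit_le_partial_prod[OF r_nonneg r_le_1 D2]] .
  moreover have "convex_on UNIV f \<Longrightarrow> f (x t) - f xstar \<le> g (x t) \<bullet> d t" for t
    using fw_gap_ge_primal_gap[OF _ grad opt(1)] .
  ultimately show ?thesis
    by (simp add: G_set_eq_UNIV)
qed

end
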